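(* Let $f:\mathbb{R}^2\to\mathbb{R}^2$ be a Topologically Anosov homeomorphism and $z_0\in\mathrm{Fix}(f)$. If $\Omega(f)=\{z_0\}$, then there exists $x\in\mathbb{R}^2$ with $\alpha(x)=\emptyset$ or $\omega(x)=\emptyset$.
   Context: A homeomorphism $f:\mathbb{R}^2\to\mathbb{R}^2$ is Topologically Anosov (TA) if: (i) there is a continuous strictly positive $\epsilon:\mathbb{R}^2\to\mathbb{R}$ such that for all $x\neq y$ there is $k\in\mathbb{Z}$ with $\|f^k(x)-f^k(y)\|>\epsilon(f^k(x))$; and (ii) for every continuous strictly positive $\epsilon$ there is a continuous strictly positive $\delta$ such that every $\delta$-pseudo-orbit is $\epsilon$-shadowed by an orbit. A $\delta$-pseudo-orbit is a sequence $(x_n)_{n\in\mathbb{Z}}$ with $\|f(x_n)-x_{n+1}\|<\delta(f(x_n))$; it is $\epsilon$-shadowed by the orbit of $x$ if $\|x_n-f^n(x)\|<\epsilon(x_n)$ for all $n$. $\Omega(f)$ is the nonwandering set; $\alpha(x),\omega(x)$ are the $\alpha$- and $\omega$-limit sets. *)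

theory Defs
  imports "HOL-Analysis.Analysis"
begin

type_synonym R2 = "real ^ 2"

definition plane_homeo :: "(R2 \<Rightarrow> R2) \<Rightarrow> bool" where
  "plane_homeo f \<longleftrightarrow> (\<exists>g. homeomorphism UNIV UNIV f g)"

definition iter :: "(R2 \<Rightarrow> R2) \<Rightarrow> int \<Rightarrow> R2 \<Rightarrow> R2" where
  "iter f k = (if 0 \<le> k then f ^^ nat k else inv f ^^ nat (- k))"

definition pos_cont_fun :: "(R2 \<Rightarrow> real) \<Rightarrow> bool" where
  "pos_cont_fun e \<longleftrightarrow> continuous_on UNIV e \<and> (\<forall>x. 0 < e x)"

definition pseudo_orbit :: "(R2 \<Rightarrow> R2) \<Rightarrow> (R2 \<Rightarrow> real) \<Rightarrow> (int \<Rightarrow> R2) \<Rightarrow> bool" where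
  "pseudo_orbit f \<delta> xs \<longleftrightarrow> (\<forall>n. norm (f (xs n) - xs (n + 1)) < \<delta> (f (xs n)))"

definition shadows :: "(R2 \<Rightarrow> R2) \<Rightarrow> (R2 \<Rightarrow> real) \<Rightarrow> R2 \<Rightarrow> (int \<Rightarrow> R2) \<Rightarrow> bool" where
  "shadows f \<epsilon> x xs \<longleftrightarrow> (\<forall>n. norm (xs n - iter f n x) < \<epsilon> (xs n))"

definition topologically_anosov :: "(R2 \<Rightarrow> R2) \<Rightarrow> bool" where
  "topologically_anosov f \<longleftrightarrow> plane_homeo f
     \<and> (\<exists>\<epsilon>. pos_cont_fun \<epsilon> \<and>
          (\<forall>x y. x \<noteq> y \<longrightarrow> (\<exists>k::int. norm (iter f k x - iter f k y) > \<epsilon> (iter f k x))))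
     \<and> (\<forall>\<epsilon>. pos_cont_fun \<epsilon> \<longrightarrow> (\<exists>\<delta>. pos_cont_fun \<delta> \<and>
          (\<forall>xs. pseudo_orbit f \<delta> xs \<longrightarrow> (\<exists>x. shadows f \<epsilon> x xs))))"

definition nonwandering :: "(R2 \<Rightarrow> R2) \<Rightarrow> R2 set" where
  "nonwandering f = {x. \<forall>U. open U \<and> x \<in> U \<longrightarrow> (\<exists>n::nat. n \<ge> 1 \<and> (f ^^ n) ` U \<inter> U \<noteq> {})}"

definition omega_limit :: "(R2 \<Rightarrow> R2) \<Rightarrow> R2 \<Rightarrow> R2 set" where
  "omega_limit f x = {y. \<exists>r. strict_mono r \<and> (\<lambda>k. iter f (int (r k)) x) \<longlonglongrightarrow> y}"

definition alpha_limit :: "(R2 \<Rightarrow> R2) \<Rightarrow> R2 \<Rightarrow> R2 set" where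
  "alpha_limit f x = {y. \<exists>r. strict_mono r \<and> (\<lambda>k. iter f (- int (r k)) x) \<longlonglongrightarrow> y}"

end

theory Submission
  imports Defs
begin

text \<open>
  Limit sets lie in the nonwandering set, so if all \<alpha>- and \<omega>-limit sets were nonempty they
  would all equal \<open>{z0}\<close>. Take \<open>x \<noteq> z0\<close>: its orbit comes arbitrarily close to \<open>z0\<close> in the
  past and in the future, so a long segment of it, from near \<open>z0\<close> back to near \<open>z0\<close>, closes
  up to a periodic pseudo-orbit through \<open>x\<close>. A shadowing orbit then returns infinitely often
  to a small ball around \<open>x\<close>, so its \<omega>-limit set contains a point other than \<open>z0\<close>.
\<close>

lemma plane_homeo_bij: "plane_homeo f \<Longrightarrow> bij f"
  unfolding plane_homeo_def homeomorphism_def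
  by (metis UNIV_I bij_betw_byWitness subsetI)

lemma iter_of_nat: "iter f (int n) = f ^^ n"
  by (simp add: iter_def)

lemma iter_0: "iter f 0 x = x"
  by (simp add: iter_def)

lemma iter_add1:
  assumes "bij f"
  shows "iter f (k + 1) x = f (iter f k x)"
proof (cases "0 \<le> k")
  case True
  then have "nat (k + 1) = Suc (nat k)" by simp
  with True show ?thesis by (simp add: iter_def)
next
  case False
  then have "nat (- k) = Suc (nat (- (k + 1)))" by simp
  with False assms show ?thesis
    by (simp add: iter_def bij_is_surj surj_f_inv_f)
qed

lemma iter_diff1:
  assumes "bij f"
  shows "iter f (k - 1) x = inv f (iter f k x)"
  using iter_add1[OF assms, of "k - 1" x] assms by (simp add: bij_is_inj)

lemma iter_add:
  assumes "bij f"
  shows "iter f (i + j) x = iter f i (iter f j x)"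
proof (induction i rule: int_induct[where k = 0])
  case base
  then show ?case by (simp add: iter_0)
next
  case (step1 i)
  have "iter f (i + 1 + j) x = f (iter f (i + j) x)"
    using iter_add1[OF assms, of "i + j"] by (simp add: algebra_simps)
  with step1 show ?case by (simp add: iter_add1[OF assms])
next
  case (step2 i)
  have "iter f (i - 1 + j) x = inv f (iter f (i + j) x)"
    using iter_diff1[OF assms, of "i + j"] by (simp add: algebra_simps)
  with step2 show ?case by (simp add: iter_diff1[OF assms])
qed

lemma omega_limit_returns:
  assumes "z \<in> omega_limit f x" "0 < \<eta>"
  shows "\<exists>n\<ge>N. iter f (int n) x \<in> ball z \<eta>"
proof -
  obtain r where r: "strict_mono r" "(\<lambda>k. iter f (int (r k)) x) \<longlonglongrightarrow> z"
    using assms(1) by (auto simp: omega_limit_def)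
  then obtain k0 where "\<And>k. k \<ge> k0 \<Longrightarrow> iter f (int (r k)) x \<in> ball z \<eta>"
    using assms(2) by (metis LIMSEQ_iff_nz dist_commute mem_ball)
  moreover have "r (max k0 N) \<ge> N"
    using seq_suble[OF r(1)] by (meson max.cobounded2 order.trans)
  ultimately show ?thesis by auto
qed

lemma alpha_limit_returns:
  assumes "z \<in> alpha_limit f x" "0 < \<eta>"
  shows "\<exists>n\<ge>N. iter f (- int n) x \<in> ball z \<eta>"
proof -
  obtain r where r: "strict_mono r" "(\<lambda>k. iter f (- int (r k)) x) \<longlonglongrightarrow> z"
    using assms(1) by (auto simp: alpha_limit_def)
  then obtain k0 where "\<And>k. k \<ge> k0 \<Longrightarrow> iter f (- int (r k)) x \<in> ball z \<eta>"
    using assms(2) by (metis LIMSEQ_iff_nz dist_commute mem_ball)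
  moreover have "r (max k0 N) \<ge> N"
    using seq_suble[OF r(1)] by (meson max.cobounded2 order.trans)
  ultimately show ?thesis by auto
qed

lemma nonwanderingI_iter:
  assumes "bij f"
    and returns: "\<And>e. 0 < e \<Longrightarrow> \<exists>i j. i < j \<and> iter f i y \<in> ball w e \<and> iter f j y \<in> ball w e"
  shows "w \<in> nonwandering f"
  unfolding nonwandering_def
proof (intro CollectI allI impI)
  fix U :: "R2 set"
  assume "open U \<and> w \<in> U"
  then obtain e where "0 < e" "ball w e \<subseteq> U"
    using open_contains_ball by blast
  with returns obtain i j where ij: "i < j" "iter f i y \<in> U" "iter f j y \<in> U"
    by blast
  have "(f ^^ nat (j - i)) (iter f i y) = iter f (j - i) (iter f i y)"
    using ij(1) by (simp flip: iter_of_nat)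
  also have "\<dots> = iter f j y"
    by (simp flip: iter_add[OF assms(1)])
  finally have "iter f j y \<in> (f ^^ nat (j - i)) ` U \<inter> U"
    using ij by (metis IntI image_eqI)
  moreover have "nat (j - i) \<ge> 1"
    using ij(1) by simp
  ultimately show "\<exists>n\<ge>1. (f ^^ n) ` U \<inter> U \<noteq> {}"
    by blast
qed

lemma omega_limit_subset_nonwandering:
  assumes "bij f"
  shows "omega_limit f y \<subseteq> nonwandering f"
proof
  fix w
  assume w: "w \<in> omega_limit f y"
  show "w \<in> nonwandering f"
  proof (rule nonwanderingI_iter[OF assms])
    fix e :: real
    assume "0 < e"
    then obtain n1 n2 where "n2 \<ge> Suc n1" "iter f (int n1) y \<in> ball w e" "iter f (int n2) y \<in> ball w e"
      using omega_limit_returns[OF w] by meson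
    then show "\<exists>i j. i < j \<and> iter f i y \<in> ball w e \<and> iter f j y \<in> ball w e"
      by (metis Suc_le_lessD of_nat_less_iff)
  qed
qed

lemma alpha_limit_subset_nonwandering:
  assumes "bij f"
  shows "alpha_limit f y \<subseteq> nonwandering f"
proof
  fix w
  assume w: "w \<in> alpha_limit f y"
  show "w \<in> nonwandering f"
  proof (rule nonwanderingI_iter[OF assms])
    fix e :: real
    assume "0 < e"
    then obtain m1 m2 where "m2 \<ge> Suc m1" "iter f (- int m1) y \<in> ball w e" "iter f (- int m2) y \<in> ball w e"
      using alpha_limit_returns[OF w] by meson
    then show "\<exists>i j. i < j \<and> iter f i y \<in> ball w e \<and> iter f j y \<in> ball w e"
      by (metis Suc_le_lessD neg_less_iff_less of_nat_less_iff)
  qed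
qed

lemma omega_limit_meets_compact:
  fixes t :: "nat \<Rightarrow> nat"
  assumes "compact K" "strict_mono t" "\<And>j. iter f (int (t j)) y \<in> K"
  shows "omega_limit f y \<inter> K \<noteq> {}"
proof -
  obtain w r where w: "w \<in> K" "strict_mono r" "((\<lambda>j. iter f (int (t j)) y) \<circ> r) \<longlonglongrightarrow> w"
    using seq_compactE[OF compact_imp_seq_compact[OF assms(1)], of "\<lambda>j. iter f (int (t j)) y"] assms(3)
    by blast
  have "strict_mono (t \<circ> r)"
    using assms(2) w(2) by (simp add: strict_mono_def)
  with w(3) have "w \<in> omega_limit f y"
    unfolding omega_limit_def by (intro CollectI exI[of _ "t \<circ> r"]) (simp add: o_def)
  with w(1) show ?thesis
    by blast
qed

lemma continuous_at_closing_radius: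
  fixes \<delta> :: "'a::metric_space \<Rightarrow> real"
  assumes "continuous (at z) \<delta>" "0 < \<delta> z"
  shows "\<exists>\<eta>>0. \<forall>u v. u \<in> ball z \<eta> \<longrightarrow> v \<in> ball z \<eta> \<longrightarrow> dist u v < \<delta> u"
proof -
  have "0 < \<delta> z / 2"
    using assms(2) by simp
  then obtain \<rho> where \<rho>: "0 < \<rho>" "\<And>u. dist u z < \<rho> \<Longrightarrow> dist (\<delta> u) (\<delta> z) < \<delta> z / 2"
    using assms(1) unfolding continuous_at_eps_delta by blast
  define \<eta> where "\<eta> = min \<rho> (\<delta> z / 4)"
  have "dist u v < \<delta> u" if "u \<in> ball z \<eta>" "v \<in> ball z \<eta>" for u v
  proof -
    have uz: "dist u z < \<rho>" "dist u z < \<delta> z / 4" and vz: "dist v z < \<delta> z / 4"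
      using that by (auto simp: \<eta>_def dist_commute)
    have "dist u v \<le> dist u z + dist v z"
      by (rule dist_triangle2)
    also have "\<dots> < \<delta> z / 2"
      using uz vz by linarith
    also have "\<dots> < \<delta> u"
      using \<rho>(2)[OF uz(1)] unfolding dist_real_def by arith
    finally show ?thesis .
  qed
  moreover have "0 < \<eta>"
    using \<rho>(1) assms(2) by (simp add: \<eta>_def)
  ultimately show ?thesis by blast
qed

lemma pseudo_orbit_periodic:
  assumes "bij f" "\<And>u. 0 < \<delta> u" "0 < P"
    and closing: "norm (iter f (int P) a - a) < \<delta> (iter f (int P) a)"
  shows "pseudo_orbit f \<delta> (\<lambda>k. iter f (k mod int P) a)"
  unfolding pseudo_orbit_def
proof
  fix k :: int
  define j where "j = k mod int P"
  have j: "0 \<le> j" "j < int P"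
    using assms(3) by (auto simp: j_def)
  have step: "f (iter f j a) = iter f (j + 1) a"
    by (simp add: iter_add1[OF assms(1)])
  have next_index: "(k + 1) mod int P = (j + 1) mod int P"
    by (simp add: j_def mod_add_left_eq)
  show "norm (f (iter f (k mod int P) a) - iter f ((k + 1) mod int P) a) < \<delta> (f (iter f (k mod int P) a))"
  proof (cases "j + 1 < int P")
    case True
    then show ?thesis
      using j step next_index assms(2) by (simp add: j_def)
  next
    case False
    then have "j + 1 = int P"
      using j by simp
    then show ?thesis
      using step next_index closing by (simp add: j_def iter_0)
  qed
qed

lemma omega_limit_shadowing_periodic:
  assumes "bij f" "m < P"
    and shadow: "\<And>k. norm (iter f (k mod int P) a - iter f k y) < c"
  shows "omega_limit f y \<inter> cball (iter f (int m) a) c \<noteq> {}"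
proof (rule omega_limit_meets_compact)
  show "strict_mono (\<lambda>j. j * P + m)"
    using assms(2) by (simp add: strict_mono_def)
  show "iter f (int (j * P + m)) y \<in> cball (iter f (int m) a) c" for j
  proof -
    have "int (j * P + m) mod int P = int m"
      using assms(2) by (simp add: zmod_int)
    then show ?thesis
      using shadow[of "int (j * P + m)"] by (simp add: dist_norm less_imp_le)
  qed
qed simp

lemma omega_limit_near_biasymptotic_point:
  assumes "topologically_anosov f" "z \<in> alpha_limit f x" "z \<in> omega_limit f x" "0 < c"
  shows "\<exists>y. omega_limit f y \<inter> cball x c \<noteq> {}"
proof -
  have bij: "bij f"
    using assms(1) plane_homeo_bij by (auto simp: topologically_anosov_def)
  have "pos_cont_fun (\<lambda>_. c)"
    using assms(4) by (simp add: pos_cont_fun_def)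
  then obtain \<delta> where \<delta>: "pos_cont_fun \<delta>"
    and shadowing: "\<And>xs. pseudo_orbit f \<delta> xs \<Longrightarrow> \<exists>y. shadows f (\<lambda>_. c) y xs"
    using assms(1) unfolding topologically_anosov_def by blast
  then have \<delta>_pos: "\<And>u. 0 < \<delta> u" and "continuous (at z) \<delta>"
    by (auto simp: pos_cont_fun_def continuous_on_eq_continuous_at)
  then obtain \<eta> where \<eta>: "0 < \<eta>" "\<And>u v. u \<in> ball z \<eta> \<Longrightarrow> v \<in> ball z \<eta> \<Longrightarrow> dist u v < \<delta> u"
    using continuous_at_closing_radius by blast
  obtain m where m: "iter f (- int m) x \<in> ball z \<eta>"
    using alpha_limit_returns[OF assms(2) \<eta>(1)] by blast
  obtain n where n: "n \<ge> 1" "iter f (int n) x \<in> ball z \<eta>"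
    using omega_limit_returns[OF assms(3) \<eta>(1)] by blast
  define a where "a = iter f (- int m) x"
  have x_eq: "iter f (int m) a = x"
    by (simp add: a_def iter_0 flip: iter_add[OF bij])
  have "iter f (int (m + n)) a = iter f (int n) x"
    by (simp add: a_def flip: iter_add[OF bij])
  then have "norm (iter f (int (m + n)) a - a) < \<delta> (iter f (int (m + n)) a)"
    using \<eta>(2)[OF n(2) m] by (simp add: a_def dist_norm)
  then have "pseudo_orbit f \<delta> (\<lambda>k. iter f (k mod int (m + n)) a)"
    using n(1) by (intro pseudo_orbit_periodic[OF bij \<delta>_pos]) auto
  then obtain y where "\<And>k. norm (iter f (k mod int (m + n)) a - iter f k y) < c"
    using shadowing unfolding shadows_def by blast
  then have "omega_limit f y \<inter> cball x c \<noteq> {}"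
    using omega_limit_shadowing_periodic[OF bij, of m "m + n"] n(1) x_eq by auto
  then show ?thesis ..
qed

theorem mainTheorem13:
  fixes f :: "real ^ 2 \<Rightarrow> real ^ 2" and z0 :: "real ^ 2"
  assumes "topologically_anosov f"
    and "f z0 = z0"
    and "nonwandering f = {z0}"
  shows "\<exists>x. alpha_limit f x = {} \<or> omega_limit f x = {}"
proof (rule ccontr)
  assume "\<not> ?thesis"
  then have nonempty: "alpha_limit f x \<noteq> {}" "omega_limit f x \<noteq> {}" for x
    by auto
  have "bij f"
    using assms(1) plane_homeo_bij by (auto simp: topologically_anosov_def)
  then have "alpha_limit f x \<subseteq> {z0}" "omega_limit f x \<subseteq> {z0}" for x
    using alpha_limit_subset_nonwandering omega_limit_subset_nonwandering assms(3) by metis+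
  with nonempty have limits: "alpha_limit f x = {z0}" "omega_limit f x = {z0}" for x
    by (auto simp: subset_singleton_iff)
  define x where "x = z0 + axis 1 1"
  then have "0 < dist x z0"
    by simp
  then obtain y where "omega_limit f y \<inter> cball x (dist x z0 / 2) \<noteq> {}"
    using omega_limit_near_biasymptotic_point[OF assms(1)] limits by (metis half_gt_zero singletonI)
  with limits have "dist x z0 \<le> dist x z0 / 2"
    by (simp add: dist_commute)
  with \<open>0 < dist x z0\<close> show False
    by simp
qed

end
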